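(* Let $m\ge1$ be an integer, let $\mathcal{T}$ be the $m\times m$ lower bidiagonal matrix with $1$ on the diagonal and $-1$ on the sub-diagonal, and let $\gamma\in[0,2]$ with $\gamma\ne1$. Put $A_\gamma=(1-\gamma)\mathcal{T}+\gamma I_m$. Then every eigenvalue $\sigma$ of $A_\gamma A_\gamma^\dagger$ can be written as $$\sigma=(1-\gamma)^2+2(1-\gamma)\cos\theta+1=\left(\frac{\sin\theta}{\sin m\theta}\right)^2$$ for some real $\theta\not\equiv0\pmod\pi$ satisfying $(1-\gamma)\sin m\theta+\sin(m+1)\theta=0$. *)

theory Defs
  imports Complex_Main "Jordan_Normal_Form.Schur_Decomposition"
begin

definition bidiagT :: "nat \<Rightarrow> complex mat" where
  "bidiagT m = mat m m (\<lambda>(i, j). if i = j then 1 else if i = j + 1 then -1 else 0)"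

definition A_gamma :: "nat \<Rightarrow> real \<Rightarrow> complex mat" where
  "A_gamma m \<gamma> = complex_of_real (1 - \<gamma>) \<cdot>\<^sub>m bidiagT m + complex_of_real \<gamma> \<cdot>\<^sub>m 1\<^sub>m m"

end

theory Submission
  imports Defs
begin

text \<open>
  Since \<open>A A\<^sup>*\<close> is positive semidefinite, \<open>\<sigma>\<close> is real, and with \<open>a = 1 - \<gamma> \<noteq> 0\<close> it can be
  written \<open>\<sigma> = 1 + a\<^sup>2 + 2 a c\<close>. For an eigenvector \<open>x\<close>, padded by \<open>x(m) = 0\<close>, the interior rows
  of \<open>A A\<^sup>* x = \<sigma> x\<close> are the Chebyshev recurrence \<open>x(j+2) + 2 c x(j+1) + x(j) = 0\<close>, and the
  first row says that the ghost value \<open>x(-1) = a x(0)\<close> continues it. Running the recurrence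
  backwards from \<open>x(m) = 0\<close> expresses everything through the Chebyshev polynomials \<open>U\<close> of the
  second kind, and the first row becomes \<open>a U(m-1, c) + U(m, c) = 0\<close>. This is impossible for
  \<open>|c| \<ge> 1\<close> and \<open>|a| \<le> 1\<close>, where \<open>U(n, c)\<close> grows in \<open>n\<close>, so \<open>c = cos \<theta>\<close> with \<open>sin \<theta> \<noteq> 0\<close>;
  then \<open>sin ((n+1) \<theta>) = U(n, cos \<theta>) sin \<theta>\<close> turns the condition into \<open>a sin m\<theta> + sin (m+1)\<theta> = 0\<close>,
  from which the second expression for \<open>\<sigma>\<close> is elementary trigonometry.
\<close>

fun chebyshev_U :: "nat \<Rightarrow> real \<Rightarrow> real" where
  "chebyshev_U 0 x = 1"
| "chebyshev_U (Suc 0) x = 2 * x"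
| "chebyshev_U (Suc (Suc n)) x = 2 * x * chebyshev_U (Suc n) x - chebyshev_U n x"

lemma sin_Suc_mult_eq_chebyshev_U: "sin (real (Suc n) * t) = chebyshev_U n (cos t) * sin t"
proof (induction n "cos t" rule: chebyshev_U.induct)
  case 2
  then show ?case by (simp add: sin_double)
next
  case (3 n)
  have "sin (real (Suc (Suc (Suc n))) * t) + sin (real (Suc n) * t) = 2 * cos t * sin (real (Suc (Suc n)) * t)"
    using sin_add[of "real (Suc (Suc n)) * t" t] sin_diff[of "real (Suc (Suc n)) * t" t]
    by (simp add: algebra_simps)
  then show ?case
    using 3 by (simp add: algebra_simps)
qed simp

lemma chebyshev_U_uminus: "chebyshev_U n (- x) = (-1) ^ n * chebyshev_U n x"
  by (induction n x rule: chebyshev_U.induct) (auto simp: algebra_simps)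

lemma chebyshev_U_growth:
  assumes "1 \<le> x"
  shows "0 \<le> chebyshev_U n x \<and> chebyshev_U n x + 1 \<le> chebyshev_U (Suc n) x"
proof (induction n)
  case 0
  then show ?case using assms by simp
next
  case (Suc n)
  have "chebyshev_U (Suc n) x \<le> x * chebyshev_U (Suc n) x"
    using Suc assms mult_right_mono[of 1 x "chebyshev_U (Suc n) x"] by simp
  moreover have "chebyshev_U (Suc (Suc n)) x = 2 * x * chebyshev_U (Suc n) x - chebyshev_U n x"
    by simp
  ultimately show ?case
    using Suc by linarith
qed

lemma chebyshev_U_boundary_nonzero:
  assumes "1 \<le> \<bar>x\<bar>" "\<bar>a\<bar> \<le> 1"
  shows "a * chebyshev_U n x + chebyshev_U (Suc n) x \<noteq> 0"
proof -
  have pos: "0 < b * chebyshev_U n y + chebyshev_U (Suc n) y" if "1 \<le> y" "\<bar>b\<bar> \<le> 1" for b y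
  proof -
    have "(- 1) * chebyshev_U n y \<le> b * chebyshev_U n y"
      using chebyshev_U_growth[OF \<open>1 \<le> y\<close>, of n] \<open>\<bar>b\<bar> \<le> 1\<close>
      by (intro mult_right_mono) auto
    then show ?thesis
      using chebyshev_U_growth[OF \<open>1 \<le> y\<close>, of n] by linarith
  qed
  show ?thesis
  proof (cases "1 \<le> x")
    case True
    then show ?thesis using pos[of x a] assms by simp
  next
    case False
    then have "0 < (- a) * chebyshev_U n (- x) + chebyshev_U (Suc n) (- x)"
      using pos[of "- x" "- a"] assms by simp
    moreover have "(- a) * chebyshev_U n (- x) + chebyshev_U (Suc n) (- x)
        = - ((-1) ^ n * (a * chebyshev_U n x + chebyshev_U (Suc n) x))"
      by (simp add: chebyshev_U_uminus algebra_simps)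
    ultimately show ?thesis
      by auto
  qed
qed

lemma chebyshev_U_recurrence_solution:
  fixes w :: "nat \<Rightarrow> 'a::{real_algebra_1, comm_ring_1}"
  assumes "w 0 = 0"
    and "\<And>k. Suc (Suc k) \<le> N \<Longrightarrow> w (Suc (Suc k)) = 2 * of_real x * w (Suc k) - w k"
  shows "Suc n \<le> N \<Longrightarrow> w (Suc n) = of_real (chebyshev_U n x) * w 1"
proof (induction n rule: induct_nat_012)
  fix n
  assume "Suc n \<le> N \<Longrightarrow> w (Suc n) = of_real (chebyshev_U n x) * w 1"
    and "Suc (Suc n) \<le> N \<Longrightarrow> w (Suc (Suc n)) = of_real (chebyshev_U (Suc n) x) * w 1"
    and "Suc (Suc (Suc n)) \<le> N"
  then show "w (Suc (Suc (Suc n))) = of_real (chebyshev_U (Suc (Suc n)) x) * w 1"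
    using assms(2)[of "Suc n"] by (simp add: algebra_simps)
qed (use assms in \<open>simp_all add: assms(2)[of 0]\<close>)

lemma chebyshev_U_boundary_of_recurrence:
  fixes x :: "nat \<Rightarrow> complex" and a c :: real
  assumes nonzero: "\<exists>i<m. x i \<noteq> 0" and "x m = 0"
    and first: "x 1 + of_real (a + 2 * c) * x 0 = 0"
    and interior: "\<And>j. Suc j < m \<Longrightarrow> x (Suc (Suc j)) + 2 * of_real c * x (Suc j) + x j = 0"
  shows "a * chebyshev_U (m - 1) c + chebyshev_U m c = 0"
proof -
  \<comment> \<open>the value at \<open>k = m + 1\<close> is the ghost point that makes the first row one more step
    of the recurrence\<close>
  define w where "w k = (-1) ^ k * (if k \<le> m then x (m - k) else of_real a * x 0)" for k
  have "w (Suc (Suc k)) = 2 * of_real c * w (Suc k) - w k" if "Suc (Suc k) \<le> m + 1" for k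
  proof (cases "Suc (Suc k) \<le> m")
    case True
    define j where "j = m - Suc (Suc k)"
    have "m - k = Suc (Suc j)" "m - Suc k = Suc j" "Suc j < m"
      using True by (auto simp: j_def)
    then have "w (Suc (Suc k)) - (2 * of_real c * w (Suc k) - w k)
        = (-1) ^ k * (x (Suc (Suc j)) + 2 * of_real c * x (Suc j) + x j)"
      using True by (simp add: w_def j_def[symmetric] algebra_simps)
    also have "\<dots> = 0"
      using interior[OF \<open>Suc j < m\<close>] by simp
    finally show ?thesis
      by (simp only: right_minus_eq)
  next
    case False
    then have "m = Suc k" using that by simp
    then have "w (Suc (Suc k)) - (2 * of_real c * w (Suc k) - w k)
        = (-1) ^ k * (x 1 + of_real (a + 2 * c) * x 0)"
      by (simp add: w_def algebra_simps)
    also have "\<dots> = 0"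
      using first by simp
    finally show ?thesis
      by (simp only: right_minus_eq)
  qed
  moreover have "w 0 = 0" using \<open>x m = 0\<close> by (simp add: w_def)
  ultimately have w_eq: "w (Suc n) = of_real (chebyshev_U n c) * w 1" if "Suc n \<le> m + 1" for n
    using chebyshev_U_recurrence_solution[of w "m + 1" c] that by blast
  have "w 1 \<noteq> 0"
  proof
    assume "w 1 = 0"
    obtain i where "i < m" "x i \<noteq> 0" using nonzero by blast
    have "Suc (m - Suc i) = m - i"
      using \<open>i < m\<close> by simp
    then have "w (m - i) = 0"
      using w_eq[of "m - Suc i"] \<open>w 1 = 0\<close> by simp
    moreover have "w (m - i) = (-1) ^ (m - i) * x i"
      using \<open>i < m\<close> by (simp add: w_def)
    ultimately show False
      using \<open>x i \<noteq> 0\<close> by simp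
  qed
  obtain n where m: "m = Suc n" using nonzero by (cases m) auto
  have "w m = of_real (chebyshev_U n c) * w 1" "w (Suc m) = of_real (chebyshev_U (Suc n) c) * w 1"
    using w_eq[of n] w_eq[of "Suc n"] m by simp_all
  then have "of_real (a * chebyshev_U n c + chebyshev_U (Suc n) c) * w 1 = of_real a * w m + w (Suc m)"
    by (simp add: algebra_simps)
  also have "\<dots> = 0"
    by (simp add: w_def)
  finally have "a * chebyshev_U n c + chebyshev_U (Suc n) c = 0"
    using \<open>w 1 \<noteq> 0\<close> by (metis mult_eq_0_iff of_real_eq_0_iff)
  then show ?thesis
    using m by simp
qed

lemma sin_quotient_squared:
  fixes a t u :: real
  assumes boundary: "a * sin u + sin (u + t) = 0" and "sin t \<noteq> 0"
  shows "a\<^sup>2 + 2 * a * cos t + 1 = (sin t / sin u)\<^sup>2"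
proof -
  have a_sin: "a * sin u = - sin u * cos t - cos u * sin t"
    using boundary by (simp add: sin_add)
  have "sin u \<noteq> 0"
  proof
    assume "sin u = 0"
    then have "cos u = 0" using a_sin \<open>sin t \<noteq> 0\<close> by simp
    then show False using \<open>sin u = 0\<close> sin_cos_squared_add[of u] by simp
  qed
  have "(a\<^sup>2 + 2 * a * cos t + 1) * (sin u)\<^sup>2
      = (a * sin u)\<^sup>2 + 2 * cos t * (a * sin u) * sin u + (sin u)\<^sup>2"
    by (simp add: algebra_simps power2_eq_square)
  also have "\<dots> = (cos u)\<^sup>2 * (sin t)\<^sup>2 + (sin u)\<^sup>2 * (1 - (cos t)\<^sup>2)"
    unfolding a_sin by (simp add: algebra_simps power2_eq_square)
  also have "\<dots> = ((cos u)\<^sup>2 + (sin u)\<^sup>2) * (sin t)\<^sup>2"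
    unfolding cos_squared_eq[of t] distrib_right by simp
  also have "\<dots> = (sin t)\<^sup>2"
    by simp
  finally show ?thesis
    using \<open>sin u \<noteq> 0\<close> by (simp add: power_divide eq_divide_eq)
qed

lemma conjugate_mat_adjoint_mult_vec:
  fixes A :: "'a :: conjugatable_field mat"
  assumes "v \<in> carrier_vec (dim_row A)"
  shows "conjugate (mat_adjoint A *\<^sub>v v) = transpose_mat A *\<^sub>v conjugate v"
  using assms
  by (intro eq_vecI) (auto simp: mat_adjoint_def conjugate_conjugate_sprod[of _ "dim_row A"])

lemma eigenvalue_mult_mat_adjoint_nonneg:
  fixes A :: "complex mat"
  assumes "eigenvalue (A * mat_adjoint A) \<sigma>"
  shows "\<sigma> \<ge> 0"
proof -
  have adj: "mat_adjoint A \<in> carrier_mat (dim_col A) (dim_row A)"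
    unfolding mat_adjoint_def by (metis mat_of_rows_carrier(1) length_map cols_length)
  obtain v where v: "v \<in> carrier_vec (dim_row A)" "v \<noteq> 0\<^sub>v (dim_row A)"
    and ev: "A *\<^sub>v (mat_adjoint A *\<^sub>v v) = \<sigma> \<cdot>\<^sub>v v"
    using assms assoc_mult_mat_vec[OF carrier_matI[OF refl refl] adj]
    unfolding eigenvalue_def eigenvector_def by auto
  define w where "w = mat_adjoint A *\<^sub>v v"
  have w: "w \<in> carrier_vec (dim_col A)" using adj v(1) by (simp add: w_def)
  have "\<sigma> * (v \<bullet>c v) = conjugate v \<bullet> (A *\<^sub>v w)"
    using v by (simp add: ev w_def conjugate_vec_sprod_comm[of _ "dim_row A"])
  also have "\<dots> = (transpose_mat A *\<^sub>v conjugate v) \<bullet> w"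
    using v w by (simp add: transpose_vec_mult_scalar[of A "dim_row A" "dim_col A"])
  also have "\<dots> = w \<bullet>c w"
    using v w by (simp add: w_def conjugate_mat_adjoint_mult_vec[symmetric] conjugate_vec_sprod_comm[of _ "dim_col A"])
  finally have "\<sigma> * (v \<bullet>c v) = w \<bullet>c w" .
  moreover have "v \<bullet>c v > 0" "w \<bullet>c w \<ge> 0" using v by auto
  ultimately show ?thesis
    by (auto simp: less_eq_complex_def less_complex_def complex_eq_iff)
       (metis zero_le_mult_iff not_less)
qed

lemma sum_two_point:
  fixes f :: "'b \<Rightarrow> 'a::semiring_0"
  assumes "finite A" "k \<noteq> i"
  shows "(\<Sum>j\<in>A. (if j = i then p else if j = k then q else 0) * f j)
    = (if i \<in> A then p * f i else 0) + (if k \<in> A then q * f k else 0)"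
proof -
  have "(\<Sum>j\<in>A. (if j = i then p else if j = k then q else 0) * f j)
      = (\<Sum>j\<in>A. (if j = i then p * f j else 0) + (if j = k then q * f j else 0))"
    by (rule sum.cong) (use assms in auto)
  then show ?thesis
    using assms by (simp add: sum.distrib)
qed

definition extend_vec :: "'a::zero vec \<Rightarrow> nat \<Rightarrow> 'a" where
  "extend_vec v j = (if j < dim_vec v then v $ j else 0)"

lemma A_gamma_eq:
  "A_gamma m \<gamma> = mat m m (\<lambda>(i, j). if i = j then 1 else if i = Suc j then - of_real (1 - \<gamma>) else 0)"
  by (rule eq_matI) (auto simp: A_gamma_def bidiagT_def algebra_simps)

lemma mat_adjoint_A_gamma_eq:
  "mat_adjoint (A_gamma m \<gamma>) = mat m m (\<lambda>(i, j). if j = i then 1 else if j = Suc i then - of_real (1 - \<gamma>) else 0)"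
  unfolding A_gamma_eq mat_adjoint_def by (rule eq_matI) (auto simp: mat_of_rows_index)

lemma A_gamma_mult_vec:
  assumes "v \<in> carrier_vec m" "i < m"
  shows "(A_gamma m \<gamma> *\<^sub>v v) $ i = v $ i - (if i = 0 then 0 else of_real (1 - \<gamma>) * v $ (i - 1))"
proof (cases i)
  case 0
  have "(A_gamma m \<gamma> *\<^sub>v v) $ i
      = (\<Sum>j = 0..<m. (if j = 0 then 1 else if 0 = Suc j then - of_real (1 - \<gamma>) else 0) * v $ j)"
    using assms 0 by (simp add: A_gamma_eq scalar_prod_def)
  also have "\<dots> = (\<Sum>j = 0..<m. (if j = 0 then v $ j else 0))"
    by (rule sum.cong) auto
  finally show ?thesis
    using assms 0 by simp
next
  case (Suc k)
  have "(A_gamma m \<gamma> *\<^sub>v v) $ i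
      = (\<Sum>j = 0..<m. (if j = i then 1 else if j = k then - of_real (1 - \<gamma>) else 0) * v $ j)"
    using assms Suc by (auto simp: A_gamma_eq scalar_prod_def intro: sum.cong)
  then show ?thesis
    using assms Suc by (simp add: sum_two_point, simp add: algebra_simps)
qed

lemma mat_adjoint_A_gamma_mult_vec:
  assumes "v \<in> carrier_vec m" "i < m"
  shows "(mat_adjoint (A_gamma m \<gamma>) *\<^sub>v v) $ i = extend_vec v i - of_real (1 - \<gamma>) * extend_vec v (Suc i)"
proof -
  have "(mat_adjoint (A_gamma m \<gamma>) *\<^sub>v v) $ i
      = (\<Sum>j = 0..<m. (if j = i then 1 else if j = Suc i then - of_real (1 - \<gamma>) else 0) * v $ j)"
    using assms by (simp add: mat_adjoint_A_gamma_eq scalar_prod_def)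
  then show ?thesis
    using assms by (simp add: sum_two_point extend_vec_def, simp add: algebra_simps)
qed

lemma A_gamma_eigenvector_rows:
  assumes "eigenvector (A_gamma m \<gamma> * mat_adjoint (A_gamma m \<gamma>)) v \<sigma>" "i < m"
  defines "x \<equiv> extend_vec v" and "a \<equiv> complex_of_real (1 - \<gamma>)"
  shows "x i - a * x (Suc i) - (if i = 0 then 0 else a * (x (i - 1) - a * x i)) = \<sigma> * x i"
proof -
  have A: "A_gamma m \<gamma> \<in> carrier_mat m m" "mat_adjoint (A_gamma m \<gamma>) \<in> carrier_mat m m"
    by (simp add: A_gamma_eq) (subst mat_adjoint_A_gamma_eq, simp)
  have v: "v \<in> carrier_vec m" and ev: "A_gamma m \<gamma> *\<^sub>v (mat_adjoint (A_gamma m \<gamma>) *\<^sub>v v) = \<sigma> \<cdot>\<^sub>v v"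
    using assms(1) A by (auto simp: eigenvector_def)
  define y where "y = mat_adjoint (A_gamma m \<gamma>) *\<^sub>v v"
  have y: "y \<in> carrier_vec m" using A v by (simp add: y_def)
  have y_eq: "y $ j = x j - a * x (Suc j)" if "j < m" for j
    using mat_adjoint_A_gamma_mult_vec[OF v that] by (simp add: y_def x_def a_def)
  have "\<sigma> * x i = (A_gamma m \<gamma> *\<^sub>v y) $ i"
    using ev v assms(2) by (simp add: y_def x_def extend_vec_def)
  also have "\<dots> = x i - a * x (Suc i) - (if i = 0 then 0 else a * (x (i - 1) - a * x i))"
    using A_gamma_mult_vec[OF y assms(2)] assms(2) by (simp add: y_eq a_def)
  finally show ?thesis by simp
qed

lemma A_gamma_eigenvalue_chebyshev:
  assumes "\<gamma> \<noteq> 1" and eig: "eigenvalue (A_gamma m \<gamma> * mat_adjoint (A_gamma m \<gamma>)) \<sigma>"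
  obtains c where "\<sigma> = of_real (1 + (1 - \<gamma>)\<^sup>2 + 2 * (1 - \<gamma>) * c)"
    and "(1 - \<gamma>) * chebyshev_U (m - 1) c + chebyshev_U m c = 0"
proof -
  define a where "a = 1 - \<gamma>"
  have "a \<noteq> 0" using assms(1) by (simp add: a_def)
  obtain s where s: "\<sigma> = of_real s"
    using nonnegative_complex_is_real[OF eigenvalue_mult_mat_adjoint_nonneg[OF eig]] Reals_cases by blast
  define c where "c = (s - 1 - a\<^sup>2) / (2 * a)"
  have \<sigma>_eq: "\<sigma> = of_real (1 + a\<^sup>2 + 2 * a * c)"
    using \<open>a \<noteq> 0\<close> s by (simp add: c_def field_simps)
  obtain v where v: "eigenvector (A_gamma m \<gamma> * mat_adjoint (A_gamma m \<gamma>)) v \<sigma>"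
    using eig by (auto simp: eigenvalue_def)
  define x where "x = extend_vec v"
  note rows = A_gamma_eigenvector_rows[OF v, folded x_def, unfolded \<sigma>_eq, folded a_def]
  have v_carrier: "v \<in> carrier_vec m" and "v \<noteq> 0\<^sub>v m"
    using v by (simp_all add: eigenvector_def A_gamma_def bidiagT_def)
  then have "dim_vec v = m" by simp
  have nonzero: "\<exists>i<m. x i \<noteq> 0"
  proof (rule ccontr)
    assume "\<not> (\<exists>i<m. x i \<noteq> 0)"
    then have "v = 0\<^sub>v m"
      using v_carrier by (intro eq_vecI) (auto simp: x_def extend_vec_def)
    then show False using \<open>v \<noteq> 0\<^sub>v m\<close> by contradiction
  qed
  moreover have "x m = 0"
    using \<open>dim_vec v = m\<close> by (simp add: x_def extend_vec_def)
  moreover have "x 1 + of_real (a + 2 * c) * x 0 = 0"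
  proof -
    have "of_real a * (x 1 + of_real (a + 2 * c) * x 0) = 0"
      using rows[of 0] nonzero by (auto simp: algebra_simps power2_eq_square)
    then show ?thesis using \<open>a \<noteq> 0\<close> by simp
  qed
  moreover have "x (Suc (Suc j)) + 2 * of_real c * x (Suc j) + x j = 0" if "Suc j < m" for j
  proof -
    have "of_real a * (x (Suc (Suc j)) + 2 * of_real c * x (Suc j) + x j) = 0"
      using rows[OF that] by (simp add: algebra_simps power2_eq_square)
    then show ?thesis using \<open>a \<noteq> 0\<close> by simp
  qed
  ultimately have "a * chebyshev_U (m - 1) c + chebyshev_U m c = 0"
    by (rule chebyshev_U_boundary_of_recurrence)
  then show ?thesis
    using that[of c] \<sigma>_eq unfolding a_def by blast
qed

theorem mainTheorem9:
  fixes m :: nat and \<gamma> :: real and \<sigma> :: complex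
  assumes "m \<ge> 1"
    and "0 \<le> \<gamma>" and "\<gamma> \<le> 2" and "\<gamma> \<noteq> 1"
    and "eigenvalue (A_gamma m \<gamma> * mat_adjoint (A_gamma m \<gamma>)) \<sigma>"
  shows "\<exists>\<theta>::real. sin \<theta> \<noteq> 0
           \<and> (1 - \<gamma>) * sin (real m * \<theta>) + sin (real (m + 1) * \<theta>) = 0
           \<and> \<sigma> = complex_of_real ((1 - \<gamma>)\<^sup>2 + 2 * (1 - \<gamma>) * cos \<theta> + 1)
           \<and> \<sigma> = complex_of_real ((sin \<theta> / sin (real m * \<theta>))\<^sup>2)"
proof -
  obtain c where \<sigma>: "\<sigma> = of_real (1 + (1 - \<gamma>)\<^sup>2 + 2 * (1 - \<gamma>) * c)"
    and boundary: "(1 - \<gamma>) * chebyshev_U (m - 1) c + chebyshev_U m c = 0"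
    using A_gamma_eigenvalue_chebyshev assms(4,5) by blast
  obtain n where m: "m = Suc n" using assms(1) by (cases m) auto
  have "\<bar>c\<bar> < 1"
    using chebyshev_U_boundary_nonzero[of c "1 - \<gamma>" n] boundary assms(2,3) m by force
  define \<theta> where "\<theta> = arccos c"
  have "cos \<theta> = c" using \<open>\<bar>c\<bar> < 1\<close> by (simp add: \<theta>_def)
  have "sin \<theta> \<noteq> 0"
    using \<open>\<bar>c\<bar> < 1\<close> abs_square_less_1[of c] by (simp add: \<theta>_def sin_arccos_abs)
  have "(1 - \<gamma>) * sin (real m * \<theta>) + sin (real m * \<theta> + \<theta>)
      = ((1 - \<gamma>) * chebyshev_U n c + chebyshev_U (Suc n) c) * sin \<theta>"
    using sin_Suc_mult_eq_chebyshev_U[of n \<theta>] sin_Suc_mult_eq_chebyshev_U[of m \<theta>]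
    by (simp add: m \<open>cos \<theta> = c\<close> algebra_simps)
  then have sin_boundary: "(1 - \<gamma>) * sin (real m * \<theta>) + sin (real m * \<theta> + \<theta>) = 0"
    using boundary m by simp
  show ?thesis
  proof (intro exI conjI)
    show "sin \<theta> \<noteq> 0" by fact
    show "(1 - \<gamma>) * sin (real m * \<theta>) + sin (real (m + 1) * \<theta>) = 0"
      using sin_boundary by (simp add: distrib_right add.commute)
    show \<sigma>_cos: "\<sigma> = of_real ((1 - \<gamma>)\<^sup>2 + 2 * (1 - \<gamma>) * cos \<theta> + 1)"
      using \<sigma> \<open>cos \<theta> = c\<close> by simp
    show "\<sigma> = of_real ((sin \<theta> / sin (real m * \<theta>))\<^sup>2)"
      by (simp only: \<sigma>_cos sin_quotient_squared[OF sin_boundary \<open>sin \<theta> \<noteq> 0\<close>])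
  qed
qed

end
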